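(* Let $k\ge2$ be even, $\alpha_1,\dots,\alpha_k$ positive integers, $G=C(\alpha_1,\dots,\alpha_k)$, and let $m(G)$ be the number of distinct Laplacian eigenvalues of $G$. Then $k\le m(G)\le 2k-1$.
   Context: $C(\alpha_1,\dots,\alpha_k)$ is defined recursively by $C(\alpha_1)=\overline{K_{\alpha_1}}$ (edgeless graph) and $C(\alpha_1,\dots,\alpha_i)=\overline{C(\alpha_1,\dots,\alpha_{i-1})\cup K_{\alpha_i}}$ for $i=2,\dots,k$ (disjoint union, then complement). Equivalently for $k$ even, with $\pi_i$ the $\alpha_i$ vertices introduced at step $i$: $\pi_i$ is a clique for $i$ odd, independent for $i$ even, and for $i<j$ vertices of $\pi_i,\pi_j$ are adjacent iff $j$ is even. Laplacian eigenvalues are those of $L=D-A$. *)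

theory Defs
  imports "Jordan_Normal_Form.Char_Poly"
begin

text \<open>The graph C(alpha_1,...,alpha_k) is encoded on the vertex set {0..<sum alpha}.
  The vertices introduced at step i+1 (0-based i) are those in
  {pre alpha i ..< pre alpha (i+1)}, where pre alpha i = sum of the first i entries.\<close>

definition pre :: "nat list \<Rightarrow> nat \<Rightarrow> nat" where
  "pre \<alpha> i = sum_list (take i \<alpha>)"

text \<open>C_adj alpha i u v: adjacency in the graph C(alpha_1,...,alpha_i) built after i steps
  (C_adj alpha 0 is the empty graph on no vertices). Step i+1: disjoint union of the
  current graph with a clique on the new vertices, then complement.\<close>

primrec C_adj :: "nat list \<Rightarrow> nat \<Rightarrow> nat \<Rightarrow> nat \<Rightarrow> bool" where
  "C_adj \<alpha> 0 u v = False"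
| "C_adj \<alpha> (Suc i) u v =
     (u < pre \<alpha> (Suc i) \<and> v < pre \<alpha> (Suc i) \<and> u \<noteq> v \<and>
      \<not> (C_adj \<alpha> i u v \<or> (pre \<alpha> i \<le> u \<and> pre \<alpha> i \<le> v)))"

definition C_graph_adj :: "nat list \<Rightarrow> nat \<Rightarrow> nat \<Rightarrow> bool" where
  "C_graph_adj \<alpha> = C_adj \<alpha> (length \<alpha>)"

definition num_vertices :: "nat list \<Rightarrow> nat" where
  "num_vertices \<alpha> = sum_list \<alpha>"

definition laplacian :: "nat \<Rightarrow> (nat \<Rightarrow> nat \<Rightarrow> bool) \<Rightarrow> real mat" where
  "laplacian n adj = mat n n (\<lambda>(u, v).
     (if u = v then real (card {w. w < n \<and> adj u w}) else 0)
     - (if adj u v then 1 else 0))"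

definition num_distinct_lap_eigs :: "nat \<Rightarrow> (nat \<Rightarrow> nat \<Rightarrow> bool) \<Rightarrow> nat" where
  "num_distinct_lap_eigs n adj = card {x :: real. eigenvalue (laplacian n adj) x}"

end

theory Submission
  imports Defs
begin

text \<open>Adjacency in \<open>C(\<alpha>\<^sub>1, ..., \<alpha>\<^sub>k)\<close> depends only on the steps at which the two vertices
  were introduced, so the Laplacian maps vectors that are constant on these \<open>k\<close> blocks to such
  vectors, acting on them through a \<open>k \<times> k\<close> quotient matrix \<open>Q\<close>. Numbering the blocks from 0,
  for \<open>1 \<le> g < k\<close> the vector that is \<open>\<alpha>\<^sub>g\<close> on the blocks before \<open>g\<close> and
  \<open>-(\<alpha>\<^sub>0 + ... + \<alpha>\<^sub>g\<^sub>-\<^sub>1)\<close> on block \<open>g\<close> is an eigenvector of \<open>Q\<close>.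
  Its eigenvalue \<open>\<lambda>\<^sub>g\<close> increases along odd \<open>g\<close>, decreases along even \<open>g\<close>, and the two
  families are separated by the total size of the odd blocks; hence \<open>0, \<lambda>\<^sub>1, ..., \<lambda>\<^sub>k\<^sub>-\<^sub>1\<close>
  are \<open>k\<close> distinct Laplacian eigenvalues.

  Conversely, for an eigenvalue \<open>x\<close> that is neither 0 nor a block degree \<open>d\<^sub>a\<close>, the
  eigenvalue equation forces the eigenvector to be block-constant and orthogonal to the block
  sizes. As \<open>Q\<close> is triangular on such vectors, a downward induction over the blocks shows that
  the eigenvector vanishes unless \<open>x\<close> is some \<open>\<lambda>\<^sub>g\<close>. Since \<open>d\<^sub>0 = \<lambda>\<^sub>1\<close>, every eigenvalue lies
  among \<open>0, \<lambda>\<^sub>1, ..., \<lambda>\<^sub>k\<^sub>-\<^sub>1, d\<^sub>1, ..., d\<^sub>k\<^sub>-\<^sub>1\<close>.\<close>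

section \<open>Blocks of consecutive vertices\<close>

lemma pre_0 [simp]: "pre \<alpha> 0 = 0"
  by (simp add: pre_def)

lemma pre_Suc: "b < length \<alpha> \<Longrightarrow> pre \<alpha> (Suc b) = pre \<alpha> b + \<alpha> ! b"
  by (simp add: pre_def take_Suc_conv_app_nth)

lemma pre_mono: "i \<le> j \<Longrightarrow> pre \<alpha> i \<le> pre \<alpha> j"
  by (metis le_add_diff_inverse pre_def sum_list_append take_add le_add1)

lemma pre_length [simp]: "pre \<alpha> (length \<alpha>) = sum_list \<alpha>"
  by (simp add: pre_def)

lemma of_nat_pre: "g \<le> length \<alpha> \<Longrightarrow> real (pre \<alpha> g) = (\<Sum>b\<in>{0..<g}. real (\<alpha> ! b))"
  by (induction g) (simp_all add: pre_Suc)

lemma sum_pre_blocks: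
  "m \<le> length \<alpha> \<Longrightarrow>
   (\<Sum>w\<in>{0..<pre \<alpha> m}. f w) = (\<Sum>b\<in>{0..<m}. \<Sum>w\<in>{pre \<alpha> b..<pre \<alpha> (Suc b)}. f w)"
proof (induction m)
  case (Suc m)
  have "(\<Sum>w\<in>{0..<pre \<alpha> (Suc m)}. f w)
      = (\<Sum>w\<in>{0..<pre \<alpha> m}. f w) + (\<Sum>w\<in>{pre \<alpha> m..<pre \<alpha> (Suc m)}. f w)"
    by (rule sum.atLeastLessThan_concat[symmetric]) (auto intro: pre_mono)
  with Suc show ?case by simp
qed simp

text \<open>Only meaningful for \<open>u < sum_list \<alpha>\<close>; beyond that the description has no witness.\<close>

definition block_of :: "nat list \<Rightarrow> nat \<Rightarrow> nat" where
  "block_of \<alpha> u = (THE b. b < length \<alpha> \<and> pre \<alpha> b \<le> u \<and> u < pre \<alpha> (Suc b))"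

lemma block_of_eqI:
  assumes b: "b < length \<alpha>" "pre \<alpha> b \<le> u" "u < pre \<alpha> (Suc b)"
  shows "block_of \<alpha> u = b"
  unfolding block_of_def
proof (rule the_equality)
  fix c assume c: "c < length \<alpha> \<and> pre \<alpha> c \<le> u \<and> u < pre \<alpha> (Suc c)"
  have False if "b < c" using pre_mono[of "Suc b" c \<alpha>] b c that by simp
  moreover have False if "c < b" using pre_mono[of "Suc c" b \<alpha>] b c that by simp
  ultimately show "c = b" by (meson linorder_neqE_nat)
qed (use b in blast)

lemma block_of_bounds:
  assumes "u < sum_list \<alpha>"
  shows "block_of \<alpha> u < length \<alpha>" "pre \<alpha> (block_of \<alpha> u) \<le> u" "u < pre \<alpha> (Suc (block_of \<alpha> u))"
proof -
  have ex: "\<exists>b<m. pre \<alpha> b \<le> u \<and> u < pre \<alpha> (Suc b)" if "m \<le> length \<alpha>" "u < pre \<alpha> m" for m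
    using that
  proof (induction m)
    case (Suc m)
    then show ?case by (cases "u < pre \<alpha> m") (auto intro: less_SucI)
  qed simp
  obtain b where "b < length \<alpha>" "pre \<alpha> b \<le> u" "u < pre \<alpha> (Suc b)"
    using ex[of "length \<alpha>"] assms by auto
  with block_of_eqI show "block_of \<alpha> u < length \<alpha>" "pre \<alpha> (block_of \<alpha> u) \<le> u"
      "u < pre \<alpha> (Suc (block_of \<alpha> u))" by auto
qed

lemma block_of_less:
  assumes "u < pre \<alpha> i" "i \<le> length \<alpha>"
  shows "block_of \<alpha> u < i"
proof (rule ccontr)
  have u: "u < sum_list \<alpha>" using assms pre_mono[of i "length \<alpha>" \<alpha>] by simp
  assume "\<not> block_of \<alpha> u < i"
  then have "pre \<alpha> i \<le> pre \<alpha> (block_of \<alpha> u)" by (intro pre_mono) simp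
  with block_of_bounds[OF u] assms show False by simp
qed

lemma block_of_pre:
  assumes "a < length \<alpha>" "0 < \<alpha> ! a"
  shows "pre \<alpha> a < sum_list \<alpha>" "block_of \<alpha> (pre \<alpha> a) = a"
proof -
  have "pre \<alpha> a < pre \<alpha> (Suc a)" using assms by (simp add: pre_Suc)
  moreover have "pre \<alpha> (Suc a) \<le> sum_list \<alpha>" using assms pre_mono[of "Suc a" "length \<alpha>" \<alpha>] by simp
  ultimately show "pre \<alpha> a < sum_list \<alpha>" "block_of \<alpha> (pre \<alpha> a) = a"
    using assms block_of_eqI by auto
qed

section \<open>Laplacians of block graphs\<close>

lemma laplacian_mult_vec_nth:
  assumes v: "v \<in> carrier_vec n" and u: "u < n" and irrefl: "\<not> adj u u"
  shows "(laplacian n adj *\<^sub>v v) $ u = (\<Sum>w\<in>{0..<n}. if adj u w then v $ u - v $ w else 0)"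
proof -
  have deg: "real (card {w. w < n \<and> adj u w}) = (\<Sum>w\<in>{0..<n}. if adj u w then 1 else 0)"
    by (simp add: sum.If_cases Int_def conj_commute)
  have "(laplacian n adj *\<^sub>v v) $ u = (\<Sum>w\<in>{0..<n}.
     ((if u = w then real (card {w. w < n \<and> adj u w}) else 0) - (if adj u w then 1 else 0)) * v $ w)"
    using v u by (simp add: laplacian_def mult_mat_vec_def scalar_prod_def)
  also have "\<dots> = (\<Sum>w\<in>{0..<n}. if u = w then real (card {w. w < n \<and> adj u w}) * v $ w else 0)
       - (\<Sum>w\<in>{0..<n}. if adj u w then v $ w else 0)"
    unfolding sum_subtractf[symmetric] by (rule sum.cong) (auto simp: algebra_simps)
  also have "(\<Sum>w\<in>{0..<n}. if u = w then real (card {w. w < n \<and> adj u w}) * v $ w else 0)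
      = real (card {w. w < n \<and> adj u w}) * v $ u"
    using u by (simp add: sum.delta)
  finally show ?thesis
    by (simp add: deg sum_distrib_right sum_subtractf[symmetric] if_distrib cong: if_cong)
qed

lemma sum_laplacian_mult_vec:
  assumes v: "v \<in> carrier_vec n"
    and sym: "\<And>u w. adj u w = adj w u" and irrefl: "\<And>u. \<not> adj u u"
  shows "(\<Sum>u\<in>{0..<n}. (laplacian n adj *\<^sub>v v) $ u) = 0"
proof -
  have "(\<Sum>u\<in>{0..<n}. (laplacian n adj *\<^sub>v v) $ u)
     = (\<Sum>u\<in>{0..<n}. \<Sum>w\<in>{0..<n}. if adj u w then v $ u else 0)
       - (\<Sum>u\<in>{0..<n}. \<Sum>w\<in>{0..<n}. if adj u w then v $ w else 0)"
    by (simp add: laplacian_mult_vec_nth[OF v _ irrefl] sum_subtractf[symmetric] if_distrib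
        cong: if_cong)
  also have "(\<Sum>u\<in>{0..<n}. \<Sum>w\<in>{0..<n}. if adj u w then v $ w else 0)
      = (\<Sum>u\<in>{0..<n}. \<Sum>w\<in>{0..<n}. if adj u w then v $ u else 0)"
    by (subst sum.swap) (simp add: sym)
  finally show ?thesis by simp
qed

definition block_graph_adj :: "nat list \<Rightarrow> (nat \<Rightarrow> nat \<Rightarrow> bool) \<Rightarrow> nat \<Rightarrow> nat \<Rightarrow> bool" where
  "block_graph_adj \<alpha> B u v \<longleftrightarrow>
     u < sum_list \<alpha> \<and> v < sum_list \<alpha> \<and> u \<noteq> v \<and> B (block_of \<alpha> u) (block_of \<alpha> v)"

definition block_sum :: "nat list \<Rightarrow> (nat \<Rightarrow> real) \<Rightarrow> nat \<Rightarrow> real" where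
  "block_sum \<alpha> f b = (\<Sum>w\<in>{pre \<alpha> b..<pre \<alpha> (Suc b)}. f w)"

text \<open>When \<open>B a a\<close>, the block itself is counted, so this is the common degree of the vertices of
  block \<open>a\<close> plus one: in either case it is the eigenvalue of the Laplacian on vectors supported
  in block \<open>a\<close> with zero sum.\<close>

definition block_degree :: "nat list \<Rightarrow> (nat \<Rightarrow> nat \<Rightarrow> bool) \<Rightarrow> nat \<Rightarrow> real" where
  "block_degree \<alpha> B a = (\<Sum>b\<in>{0..<length \<alpha>}. if B a b then real (\<alpha> ! b) else 0)"

definition quotient_laplacian ::
  "nat list \<Rightarrow> (nat \<Rightarrow> nat \<Rightarrow> bool) \<Rightarrow> (nat \<Rightarrow> real) \<Rightarrow> nat \<Rightarrow> real" where
  "quotient_laplacian \<alpha> B t a =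
     (\<Sum>b\<in>{0..<length \<alpha>}. if B a b then real (\<alpha> ! b) * (t a - t b) else 0)"

definition block_vec :: "nat list \<Rightarrow> (nat \<Rightarrow> real) \<Rightarrow> real vec" where
  "block_vec \<alpha> t = vec (sum_list \<alpha>) (\<lambda>w. t (block_of \<alpha> w))"

lemma block_sum_const:
  assumes "b < length \<alpha>" "\<And>w. pre \<alpha> b \<le> w \<Longrightarrow> w < pre \<alpha> (Suc b) \<Longrightarrow> f w = c"
  shows "block_sum \<alpha> f b = real (\<alpha> ! b) * c"
proof -
  have "block_sum \<alpha> f b = (\<Sum>w\<in>{pre \<alpha> b..<pre \<alpha> (Suc b)}. c)"
    unfolding block_sum_def by (rule sum.cong) (use assms in auto)
  then show ?thesis using assms by (simp add: pre_Suc)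
qed

lemma block_vec_carrier [simp]: "block_vec \<alpha> t \<in> carrier_vec (sum_list \<alpha>)"
  by (simp add: block_vec_def)

lemma dim_vec_block_vec [simp]: "dim_vec (block_vec \<alpha> t) = sum_list \<alpha>"
  by (simp add: block_vec_def)

lemma block_vec_index [simp]: "u < sum_list \<alpha> \<Longrightarrow> block_vec \<alpha> t $ u = t (block_of \<alpha> u)"
  by (simp add: block_vec_def)

lemma block_vec_nth:
  assumes "b < length \<alpha>" "pre \<alpha> b \<le> w" "w < pre \<alpha> (Suc b)"
  shows "block_vec \<alpha> t $ w = t b"
proof -
  have "w < sum_list \<alpha>" using assms pre_mono[of "Suc b" "length \<alpha>" \<alpha>] by simp
  with assms show ?thesis by (simp add: block_vec_def block_of_eqI)
qed

lemma sum_block_vec: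
  "(\<Sum>u\<in>{0..<sum_list \<alpha>}. block_vec \<alpha> t $ u) = (\<Sum>b\<in>{0..<length \<alpha>}. real (\<alpha> ! b) * t b)"
proof -
  have "(\<Sum>u\<in>{0..<sum_list \<alpha>}. block_vec \<alpha> t $ u) = (\<Sum>u\<in>{0..<pre \<alpha> (length \<alpha>)}. t (block_of \<alpha> u))"
    by (simp add: block_vec_def)
  also have "\<dots> = (\<Sum>b\<in>{0..<length \<alpha>}. block_sum \<alpha> (\<lambda>w. t (block_of \<alpha> w)) b)"
    unfolding block_sum_def by (rule sum_pre_blocks) simp
  also have "\<dots> = (\<Sum>b\<in>{0..<length \<alpha>}. real (\<alpha> ! b) * t b)"
    by (rule sum.cong) (auto intro: block_sum_const simp: block_of_eqI)
  finally show ?thesis .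
qed

lemma block_graph_neighbour_sum:
  assumes u: "u < sum_list \<alpha>"
  defines "a \<equiv> block_of \<alpha> u"
  shows "(\<Sum>w\<in>{0..<sum_list \<alpha>}. if block_graph_adj \<alpha> B u w then f w else 0)
    = (\<Sum>b\<in>{0..<length \<alpha>}. if B a b then block_sum \<alpha> f b else 0) - (if B a a then f u else 0)"
proof -
  have "(\<Sum>w\<in>{0..<sum_list \<alpha>}. if block_graph_adj \<alpha> B u w then f w else 0)
      = (\<Sum>w\<in>{0..<sum_list \<alpha>}. (if B a (block_of \<alpha> w) then f w else 0)
          - (if w = u then (if B a a then f u else 0) else 0))"
    by (rule sum.cong) (auto simp: block_graph_adj_def a_def u)
  also have "\<dots> = (\<Sum>w\<in>{0..<pre \<alpha> (length \<alpha>)}. if B a (block_of \<alpha> w) then f w else 0)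
      - (if B a a then f u else 0)"
    using u by (simp add: sum_subtractf sum.delta)
  also have "\<dots> = (\<Sum>b\<in>{0..<length \<alpha>}. \<Sum>w\<in>{pre \<alpha> b..<pre \<alpha> (Suc b)}.
      if B a (block_of \<alpha> w) then f w else 0) - (if B a a then f u else 0)"
    using sum_pre_blocks[of "length \<alpha>" \<alpha>] by simp
  also have "(\<Sum>b\<in>{0..<length \<alpha>}. \<Sum>w\<in>{pre \<alpha> b..<pre \<alpha> (Suc b)}.
      if B a (block_of \<alpha> w) then f w else 0) = (\<Sum>b\<in>{0..<length \<alpha>}. if B a b then block_sum \<alpha> f b else 0)"
    unfolding block_sum_def by (intro sum.cong refl) (auto simp: block_of_eqI)
  finally show ?thesis .
qed

lemma laplacian_block_graph_nth:
  assumes v: "v \<in> carrier_vec (sum_list \<alpha>)" and u: "u < sum_list \<alpha>"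
  defines "a \<equiv> block_of \<alpha> u"
  shows "(laplacian (sum_list \<alpha>) (block_graph_adj \<alpha> B) *\<^sub>v v) $ u
     = block_degree \<alpha> B a * v $ u - (\<Sum>b\<in>{0..<length \<alpha>}. if B a b then block_sum \<alpha> (($) v) b else 0)"
proof -
  have "(laplacian (sum_list \<alpha>) (block_graph_adj \<alpha> B) *\<^sub>v v) $ u
     = (\<Sum>w\<in>{0..<sum_list \<alpha>}. if block_graph_adj \<alpha> B u w then v $ u else 0)
      - (\<Sum>w\<in>{0..<sum_list \<alpha>}. if block_graph_adj \<alpha> B u w then v $ w else 0)"
    by (simp add: laplacian_mult_vec_nth[OF v u] block_graph_adj_def sum_subtractf[symmetric]
        if_distrib cong: if_cong)
  also have "\<dots> = (\<Sum>b\<in>{0..<length \<alpha>}. if B a b then block_sum \<alpha> (\<lambda>_. v $ u) b else 0)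
      - (\<Sum>b\<in>{0..<length \<alpha>}. if B a b then block_sum \<alpha> (($) v) b else 0)"
    unfolding block_graph_neighbour_sum[OF u] a_def by simp
  also have "(\<Sum>b\<in>{0..<length \<alpha>}. if B a b then block_sum \<alpha> (\<lambda>_. v $ u) b else 0)
      = block_degree \<alpha> B a * v $ u"
    unfolding block_degree_def sum_distrib_right by (rule sum.cong) (auto intro: block_sum_const)
  finally show ?thesis .
qed

lemma dim_row_laplacian [simp]: "dim_row (laplacian n adj) = n"
  by (simp add: laplacian_def)

lemma laplacian_block_vec:
  "laplacian (sum_list \<alpha>) (block_graph_adj \<alpha> B) *\<^sub>v block_vec \<alpha> t
     = block_vec \<alpha> (quotient_laplacian \<alpha> B t)"
proof (rule eq_vecI)
  fix u assume "u < dim_vec (block_vec \<alpha> (quotient_laplacian \<alpha> B t))"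
  then have u: "u < sum_list \<alpha>" by (simp add: block_vec_def)
  define a where "a = block_of \<alpha> u"
  have sum_t: "block_sum \<alpha> (($) (block_vec \<alpha> t)) b = real (\<alpha> ! b) * t b" if "b < length \<alpha>" for b
    using that by (auto intro: block_sum_const block_vec_nth)
  have "quotient_laplacian \<alpha> B t a
      = block_degree \<alpha> B a * t a - (\<Sum>b\<in>{0..<length \<alpha>}. if B a b then real (\<alpha> ! b) * t b else 0)"
    unfolding quotient_laplacian_def block_degree_def sum_distrib_right sum_subtractf[symmetric]
    by (rule sum.cong) (auto simp: algebra_simps)
  also have "\<dots> = block_degree \<alpha> B a * t a
      - (\<Sum>b\<in>{0..<length \<alpha>}. if B a b then block_sum \<alpha> (($) (block_vec \<alpha> t)) b else 0)"
    by (intro arg_cong[where f="(-) _"] sum.cong) (simp_all add: sum_t)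
  finally show "(laplacian (sum_list \<alpha>) (block_graph_adj \<alpha> B) *\<^sub>v block_vec \<alpha> t) $ u
      = block_vec \<alpha> (quotient_laplacian \<alpha> B t) $ u"
    unfolding laplacian_block_graph_nth[OF block_vec_carrier u] using u by (simp add: a_def)
qed (simp add: block_vec_def)

lemma quotient_laplacian_const [simp]: "quotient_laplacian \<alpha> B (\<lambda>_. c) a = 0"
  unfolding quotient_laplacian_def by (rule sum.neutral) simp

lemma eigenvalue_block_graph_of_quotient:
  assumes eig: "\<And>a. a < length \<alpha> \<Longrightarrow> quotient_laplacian \<alpha> B t a = x * t a"
    and c: "c < length \<alpha>" "0 < \<alpha> ! c" "t c \<noteq> 0"
  shows "eigenvalue (laplacian (sum_list \<alpha>) (block_graph_adj \<alpha> B)) x"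
proof -
  have "block_vec \<alpha> t \<noteq> 0\<^sub>v (sum_list \<alpha>)"
  proof
    assume "block_vec \<alpha> t = 0\<^sub>v (sum_list \<alpha>)"
    then have "block_vec \<alpha> t $ pre \<alpha> c = 0" using block_of_pre[OF c(1,2)] by simp
    then show False using block_of_pre[OF c(1,2)] c(3) by simp
  qed
  moreover have "laplacian (sum_list \<alpha>) (block_graph_adj \<alpha> B) *\<^sub>v block_vec \<alpha> t = x \<cdot>\<^sub>v block_vec \<alpha> t"
    unfolding laplacian_block_vec by (rule eq_vecI) (auto simp: block_vec_def eig block_of_bounds)
  ultimately show ?thesis
    unfolding eigenvalue_def eigenvector_def by (intro exI[of _ "block_vec \<alpha> t"]) simp
qed

lemma block_graph_eigenvector_eq_block_vec:
  assumes v: "v \<in> carrier_vec (sum_list \<alpha>)"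
    and eig: "laplacian (sum_list \<alpha>) (block_graph_adj \<alpha> B) *\<^sub>v v = x \<cdot>\<^sub>v v"
    and not_degree: "\<And>a. a < length \<alpha> \<Longrightarrow> block_degree \<alpha> B a \<noteq> x"
  obtains t where "v = block_vec \<alpha> t"
    and "\<And>a. a < length \<alpha> \<Longrightarrow> 0 < \<alpha> ! a \<Longrightarrow> quotient_laplacian \<alpha> B t a = x * t a"
proof -
  define t where "t a = (\<Sum>b\<in>{0..<length \<alpha>}. if B a b then block_sum \<alpha> (($) v) b else 0)
    / (block_degree \<alpha> B a - x)" for a
  \<comment> \<open>Away from the block degrees, the eigenvalue equation at \<open>u\<close> solves for \<open>v $ u\<close> in terms
    of block sums that only depend on the block of \<open>u\<close>.\<close>
  have "v $ u = t (block_of \<alpha> u)" if u: "u < sum_list \<alpha>" for u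
  proof -
    have "x * v $ u = (laplacian (sum_list \<alpha>) (block_graph_adj \<alpha> B) *\<^sub>v v) $ u"
      using eig u v by simp
    then show ?thesis
      using laplacian_block_graph_nth[OF v u] not_degree[OF block_of_bounds(1)[OF u]]
      by (simp add: t_def field_simps)
  qed
  then have v_eq: "v = block_vec \<alpha> t"
    by (intro eq_vecI) (use v in \<open>auto simp: block_vec_def\<close>)
  moreover have "quotient_laplacian \<alpha> B t a = x * t a" if "a < length \<alpha>" "0 < \<alpha> ! a" for a
  proof -
    have "quotient_laplacian \<alpha> B t a = (laplacian (sum_list \<alpha>) (block_graph_adj \<alpha> B) *\<^sub>v v) $ pre \<alpha> a"
      unfolding v_eq laplacian_block_vec using block_of_pre[OF that] by simp
    also have "\<dots> = x * t a"
      using block_of_pre[OF that] by (simp only: eig) (simp add: v_eq)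
    finally show ?thesis .
  qed
  ultimately show ?thesis using that by blast
qed

section \<open>The graph \<open>C(\<alpha>\<^sub>1, ..., \<alpha>\<^sub>k)\<close> and its quotient spectrum\<close>

text \<open>Blocks are numbered from 0, so block \<open>a\<close> is the one introduced at step \<open>a + 1\<close>.
  For an even number of steps it is a clique iff \<open>a\<close> is even, and two different blocks are
  joined iff the later one has odd index.\<close>

definition C_block_adj :: "nat \<Rightarrow> nat \<Rightarrow> bool" where
  "C_block_adj a b \<longleftrightarrow> (if a = b then even a else odd (max a b))"

lemma block_of_less_iff:
  assumes i: "i < length \<alpha>" and u: "u < pre \<alpha> (Suc i)"
  shows "block_of \<alpha> u \<le> i" "block_of \<alpha> u < i \<longleftrightarrow> u < pre \<alpha> i"
proof -
  show "block_of \<alpha> u \<le> i" using block_of_less[OF u] i by simp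
  have "u < sum_list \<alpha>" using u i pre_mono[of "Suc i" "length \<alpha>" \<alpha>] by simp
  then have "u < pre \<alpha> i" if "block_of \<alpha> u < i"
    using block_of_bounds pre_mono[of "Suc (block_of \<alpha> u)" i \<alpha>] that by fastforce
  then show "block_of \<alpha> u < i \<longleftrightarrow> u < pre \<alpha> i" using block_of_less[of u \<alpha> i] i by fastforce
qed

lemma C_adj_iff:
  "i \<le> length \<alpha> \<Longrightarrow> C_adj \<alpha> i u v \<longleftrightarrow> u < pre \<alpha> i \<and> v < pre \<alpha> i \<and> u \<noteq> v \<and>
     (if block_of \<alpha> u = block_of \<alpha> v then even (i - block_of \<alpha> u)
      else odd (i - max (block_of \<alpha> u) (block_of \<alpha> v)))"
proof (induction i)
  case (Suc i)
  then have i: "i < length \<alpha>" by simp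
  show ?case
  proof (cases "u < pre \<alpha> (Suc i) \<and> v < pre \<alpha> (Suc i)")
    case True
    then show ?thesis
      using Suc.IH i block_of_less_iff[OF i, of u] block_of_less_iff[OF i, of v]
      by (auto simp: Suc_diff_le max_def)
  qed auto
qed simp

lemma C_graph_adj_eq_block_graph_adj:
  assumes "even (length \<alpha>)"
  shows "C_graph_adj \<alpha> = block_graph_adj \<alpha> C_block_adj"
proof (intro ext)
  fix u v
  have "block_of \<alpha> u < length \<alpha>" "block_of \<alpha> v < length \<alpha>"
    if "u < sum_list \<alpha>" "v < sum_list \<alpha>" using that block_of_bounds by auto
  then show "C_graph_adj \<alpha> u v = block_graph_adj \<alpha> C_block_adj u v"
    using assms C_adj_iff[of "length \<alpha>" \<alpha> u v]
    by (auto simp: C_graph_adj_def block_graph_adj_def C_block_adj_def max_def)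
qed

lemma sum_atLeast0_split:
  "g < k \<Longrightarrow> (\<Sum>b\<in>{0..<k}. F b) = (\<Sum>b\<in>{0..<g}. F b) + F g + (\<Sum>b\<in>{Suc g..<k}. F b)"
proof -
  assume "g < k"
  then have "(\<Sum>b\<in>{0..<k}. F b) = (\<Sum>b\<in>{0..<g}. F b) + (\<Sum>b\<in>{g..<k}. F b)"
    by (simp add: sum.atLeastLessThan_concat)
  with \<open>g < k\<close> show ?thesis by (simp add: sum.atLeast_Suc_lessThan add.assoc)
qed

lemma sum_odd_even_split:
  "(\<Sum>b\<in>A. f b) = (\<Sum>b\<in>A. if odd b then f b else 0) + (\<Sum>b\<in>A. if odd b then 0 else f b)"
  unfolding sum.distrib[symmetric] by (rule sum.cong) auto

definition odd_weight_above :: "nat list \<Rightarrow> nat \<Rightarrow> real" where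
  "odd_weight_above \<alpha> g = (\<Sum>b\<in>{Suc g..<length \<alpha>}. if odd b then real (\<alpha> ! b) else 0)"

definition C_eig :: "nat list \<Rightarrow> nat \<Rightarrow> real" where
  "C_eig \<alpha> g = (if odd g then real (pre \<alpha> (Suc g)) else 0) + odd_weight_above \<alpha> g"

definition C_eigvec :: "nat list \<Rightarrow> nat \<Rightarrow> nat \<Rightarrow> real" where
  "C_eigvec \<alpha> g b = (if b < g then real (\<alpha> ! g) else if b = g then - real (pre \<alpha> g) else 0)"

lemma quotient_laplacian_C_eigvec:
  assumes g: "g < length \<alpha>" and a: "a < length \<alpha>"
  shows "quotient_laplacian \<alpha> C_block_adj (C_eigvec \<alpha> g) a = C_eig \<alpha> g * C_eigvec \<alpha> g a"
proof -
  let ?t = "C_eigvec \<alpha> g"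
  let ?F = "\<lambda>b. if C_block_adj a b then real (\<alpha> ! b) * (?t a - ?t b) else 0"
  have Q: "quotient_laplacian \<alpha> C_block_adj ?t a
      = (\<Sum>b\<in>{0..<g}. ?F b) + ?F g + (\<Sum>b\<in>{Suc g..<length \<alpha>}. ?F b)"
    unfolding quotient_laplacian_def by (rule sum_atLeast0_split[OF g])
  have pre_g: "(\<Sum>b\<in>{0..<g}. real (\<alpha> ! b)) = real (pre \<alpha> g)" using g by (simp add: of_nat_pre)
  have pre_Suc_g: "real (pre \<alpha> (Suc g)) = real (pre \<alpha> g) + real (\<alpha> ! g)" using g by (simp add: pre_Suc)
  consider "a < g" | "a = g" | "g < a" by linarith
  then show ?thesis
  proof cases
    case 1
    have S1: "(\<Sum>b\<in>{0..<g}. ?F b) = 0" by (rule sum.neutral) (use 1 in \<open>auto simp: C_eigvec_def\<close>)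
    have F: "?F g = (if odd g then real (\<alpha> ! g) * (real (\<alpha> ! g) + real (pre \<alpha> g)) else 0)"
      using 1 by (auto simp: C_eigvec_def C_block_adj_def max_def)
    have S3: "(\<Sum>b\<in>{Suc g..<length \<alpha>}. ?F b) = real (\<alpha> ! g) * odd_weight_above \<alpha> g"
      unfolding odd_weight_above_def sum_distrib_left
      by (rule sum.cong) (use 1 in \<open>auto simp: C_eigvec_def C_block_adj_def max_def\<close>)
    show ?thesis unfolding Q S1 F S3 using 1 by (simp add: C_eig_def C_eigvec_def pre_Suc_g algebra_simps)
  next
    case 2
    have S1: "(\<Sum>b\<in>{0..<g}. ?F b)
        = (if odd g then real (pre \<alpha> g) * (- real (pre \<alpha> g) - real (\<alpha> ! g)) else 0)"
    proof (cases "odd g")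
      case True
      have "(\<Sum>b\<in>{0..<g}. ?F b) = (\<Sum>b\<in>{0..<g}. real (\<alpha> ! b) * (- real (pre \<alpha> g) - real (\<alpha> ! g)))"
        by (rule sum.cong) (use 2 True in \<open>auto simp: C_eigvec_def C_block_adj_def max_def\<close>)
      then show ?thesis using True by (simp add: sum_distrib_right[symmetric] pre_g)
    next
      case False
      show ?thesis
        by (rule trans[OF sum.neutral]) (use 2 False in \<open>auto simp: C_eigvec_def C_block_adj_def max_def\<close>)
    qed
    have S3: "(\<Sum>b\<in>{Suc g..<length \<alpha>}. ?F b) = - real (pre \<alpha> g) * odd_weight_above \<alpha> g"
      unfolding odd_weight_above_def sum_distrib_left
      by (rule sum.cong) (use 2 in \<open>auto simp: C_eigvec_def C_block_adj_def max_def\<close>)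
    show ?thesis unfolding Q S1 S3 using 2 by (simp add: C_eig_def C_eigvec_def pre_Suc_g algebra_simps)
  next
    case 3
    have S1: "(\<Sum>b\<in>{0..<g}. ?F b) = (if odd a then - real (\<alpha> ! g) * real (pre \<alpha> g) else 0)"
    proof (cases "odd a")
      case True
      have "(\<Sum>b\<in>{0..<g}. ?F b) = (\<Sum>b\<in>{0..<g}. real (\<alpha> ! b) * (- real (\<alpha> ! g)))"
        by (rule sum.cong) (use 3 True in \<open>auto simp: C_eigvec_def C_block_adj_def max_def\<close>)
      also have "\<dots> = (\<Sum>b\<in>{0..<g}. real (\<alpha> ! b)) * (- real (\<alpha> ! g))"
        by (rule sum_distrib_right[symmetric])
      finally show ?thesis using True by (simp add: pre_g)
    next
      case False
      show ?thesis
        by (rule trans[OF sum.neutral]) (use 3 False in \<open>auto simp: C_eigvec_def C_block_adj_def max_def\<close>)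
    qed
    have F: "?F g = (if odd a then real (\<alpha> ! g) * real (pre \<alpha> g) else 0)"
      using 3 by (auto simp: C_eigvec_def C_block_adj_def max_def)
    have S3: "(\<Sum>b\<in>{Suc g..<length \<alpha>}. ?F b) = 0"
      by (rule sum.neutral) (use 3 in \<open>auto simp: C_eigvec_def\<close>)
    show ?thesis unfolding Q S1 F S3 using 3 by (simp add: C_eigvec_def)
  qed
qed

lemma quotient_laplacian_C_top:
  assumes g: "g < length \<alpha>" and above: "\<And>b. g < b \<Longrightarrow> b < length \<alpha> \<Longrightarrow> t b = 0"
    and orth: "(\<Sum>b\<in>{0..<length \<alpha>}. real (\<alpha> ! b) * t b) = 0"
  shows "quotient_laplacian \<alpha> C_block_adj t g = C_eig \<alpha> g * t g"
    and "(\<Sum>b\<in>{0..<g}. real (\<alpha> ! b) * t b) = - real (\<alpha> ! g) * t g"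
proof -
  have "(\<Sum>b\<in>{0..<length \<alpha>}. real (\<alpha> ! b) * t b)
      = (\<Sum>b\<in>{0..<g}. real (\<alpha> ! b) * t b) + real (\<alpha> ! g) * t g
        + (\<Sum>b\<in>{Suc g..<length \<alpha>}. real (\<alpha> ! b) * t b)"
    by (rule sum_atLeast0_split[OF g])
  also have "(\<Sum>b\<in>{Suc g..<length \<alpha>}. real (\<alpha> ! b) * t b) = 0"
    by (rule sum.neutral) (auto simp: above)
  finally show below: "(\<Sum>b\<in>{0..<g}. real (\<alpha> ! b) * t b) = - real (\<alpha> ! g) * t g"
    using orth by simp
  let ?F = "\<lambda>b. if C_block_adj g b then real (\<alpha> ! b) * (t g - t b) else 0"
  have Q: "quotient_laplacian \<alpha> C_block_adj t g
      = (\<Sum>b\<in>{0..<g}. ?F b) + ?F g + (\<Sum>b\<in>{Suc g..<length \<alpha>}. ?F b)"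
    unfolding quotient_laplacian_def by (rule sum_atLeast0_split[OF g])
  have S1: "(\<Sum>b\<in>{0..<g}. ?F b) = (if odd g then real (pre \<alpha> (Suc g)) * t g else 0)"
  proof (cases "odd g")
    case True
    have "(\<Sum>b\<in>{0..<g}. ?F b) = (\<Sum>b\<in>{0..<g}. real (\<alpha> ! b) * t g - real (\<alpha> ! b) * t b)"
      by (rule sum.cong) (use True in \<open>auto simp: C_block_adj_def max_def algebra_simps\<close>)
    also have "\<dots> = (\<Sum>b\<in>{0..<g}. real (\<alpha> ! b)) * t g - (\<Sum>b\<in>{0..<g}. real (\<alpha> ! b) * t b)"
      by (simp add: sum_subtractf sum_distrib_right)
    finally show ?thesis using True below g by (simp add: of_nat_pre pre_Suc algebra_simps)
  next
    case False
    show ?thesis by (rule trans[OF sum.neutral]) (use False in \<open>auto simp: C_block_adj_def max_def\<close>)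
  qed
  have S3: "(\<Sum>b\<in>{Suc g..<length \<alpha>}. ?F b) = odd_weight_above \<alpha> g * t g"
    unfolding odd_weight_above_def sum_distrib_right
    by (rule sum.cong) (auto simp: C_block_adj_def max_def above)
  show "quotient_laplacian \<alpha> C_block_adj t g = C_eig \<alpha> g * t g"
    unfolding Q S1 S3 by (simp add: C_eig_def algebra_simps)
qed

lemma odd_weight_above_split:
  "g < h \<Longrightarrow> h < length \<alpha> \<Longrightarrow> odd_weight_above \<alpha> g
     = (\<Sum>b\<in>{Suc g..<Suc h}. if odd b then real (\<alpha> ! b) else 0) + odd_weight_above \<alpha> h"
  unfolding odd_weight_above_def by (rule sum.atLeastLessThan_concat[symmetric]) auto

lemma of_nat_pre_split:
  assumes "g < h" "h < length \<alpha>"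
  shows "real (pre \<alpha> (Suc h)) = real (pre \<alpha> (Suc g)) + (\<Sum>b\<in>{Suc g..<Suc h}. real (\<alpha> ! b))"
proof -
  have "(\<Sum>b\<in>{0..<Suc h}. real (\<alpha> ! b))
      = (\<Sum>b\<in>{0..<Suc g}. real (\<alpha> ! b)) + (\<Sum>b\<in>{Suc g..<Suc h}. real (\<alpha> ! b))"
    by (rule sum.atLeastLessThan_concat[symmetric]) (use assms in auto)
  then show ?thesis
    using of_nat_pre[of "Suc h" \<alpha>] of_nat_pre[of "Suc g" \<alpha>] assms by simp
qed

lemma C_eig_even_le:
  "even g \<Longrightarrow> C_eig \<alpha> g \<le> (\<Sum>b\<in>{0..<length \<alpha>}. if odd b then real (\<alpha> ! b) else 0)"
  unfolding C_eig_def odd_weight_above_def by (auto intro!: sum_mono2)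

context
  fixes \<alpha> :: "nat list"
  assumes even_length: "even (length \<alpha>)" and length_ge_2: "2 \<le> length \<alpha>"
    and positive: "\<forall>a \<in> set \<alpha>. 0 < a"
begin

lemma nth_positive: "b < length \<alpha> \<Longrightarrow> 0 < \<alpha> ! b"
  using positive by simp

lemma C_eig_odd_gt:
  assumes g: "odd g" "g < length \<alpha>"
  shows "(\<Sum>b\<in>{0..<length \<alpha>}. if odd b then real (\<alpha> ! b) else 0) < C_eig \<alpha> g"
proof -
  have "(\<Sum>b\<in>{0..<length \<alpha>}. if odd b then real (\<alpha> ! b) else 0)
      = (\<Sum>b\<in>{0..<Suc g}. if odd b then real (\<alpha> ! b) else 0) + odd_weight_above \<alpha> g"
    unfolding odd_weight_above_def by (rule sum.atLeastLessThan_concat[symmetric]) (use g in auto)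
  moreover have "real (pre \<alpha> (Suc g)) = (\<Sum>b\<in>{0..<Suc g}. if odd b then real (\<alpha> ! b) else 0)
       + (\<Sum>b\<in>{0..<Suc g}. if odd b then 0 else real (\<alpha> ! b))"
    using g by (simp add: of_nat_pre sum_odd_even_split[symmetric])
  moreover have "real (\<alpha> ! 0) \<le> (\<Sum>b\<in>{0..<Suc g}. if odd b then 0 else real (\<alpha> ! b))"
    using member_le_sum[of 0 "{0..<Suc g}" "\<lambda>b. if odd b then 0 else real (\<alpha> ! b)"] by simp
  moreover have "0 < \<alpha> ! 0" using g(2) by (intro nth_positive) linarith
  ultimately show ?thesis using g by (simp add: C_eig_def)
qed

lemma C_eig_odd_less:
  assumes gh: "g < h" "h < length \<alpha>" and odd: "odd g" "odd h"
  shows "C_eig \<alpha> g < C_eig \<alpha> h"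
proof -
  have "real (\<alpha> ! Suc g) \<le> (\<Sum>b\<in>{Suc g..<Suc h}. if odd b then 0 else real (\<alpha> ! b))"
    using member_le_sum[of "Suc g" "{Suc g..<Suc h}" "\<lambda>b. if odd b then 0 else real (\<alpha> ! b)"] gh odd
    by simp
  moreover have "0 < \<alpha> ! Suc g" using gh nth_positive by simp
  ultimately show ?thesis
    using odd odd_weight_above_split[OF gh] of_nat_pre_split[OF gh]
      sum_odd_even_split[of "\<lambda>b. real (\<alpha> ! b)" "{Suc g..<Suc h}"]
    by (simp add: C_eig_def)
qed

lemma C_eig_even_less:
  assumes gh: "g < h" "h < length \<alpha>" and even: "even g" "even h"
  shows "C_eig \<alpha> h < C_eig \<alpha> g"
proof -
  have "real (\<alpha> ! Suc g) \<le> (\<Sum>b\<in>{Suc g..<Suc h}. if odd b then real (\<alpha> ! b) else 0)"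
    using member_le_sum[of "Suc g" "{Suc g..<Suc h}" "\<lambda>b. if odd b then real (\<alpha> ! b) else 0"] gh even
    by simp
  moreover have "0 < \<alpha> ! Suc g" using gh nth_positive by simp
  ultimately show ?thesis using even odd_weight_above_split[OF gh] by (simp add: C_eig_def)
qed

lemma inj_on_C_eig: "inj_on (C_eig \<alpha>) {1..<length \<alpha>}"
proof -
  have "C_eig \<alpha> g \<noteq> C_eig \<alpha> h" if gh: "g < h" "h < length \<alpha>" for g h
  proof -
    consider "odd g" "odd h" | "even g" "even h" | "odd g \<noteq> odd h" by blast
    then show ?thesis
    proof cases
      case 3
      then show ?thesis
        using C_eig_even_le[of g \<alpha>] C_eig_even_le[of h \<alpha>] C_eig_odd_gt[of g] C_eig_odd_gt[of h] gh
        by (cases "odd g") fastforce+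
    qed (use C_eig_odd_less[OF gh] C_eig_even_less[OF gh] in auto)
  qed
  then show ?thesis by (metis inj_onI atLeastLessThan_iff linorder_neqE_nat)
qed

lemma C_eig_pos:
  assumes g: "1 \<le> g" "g < length \<alpha>"
  shows "0 < C_eig \<alpha> g"
proof (cases "odd g")
  case True
  have "0 \<le> (\<Sum>b\<in>{0..<length \<alpha>}. if odd b then real (\<alpha> ! b) else 0)" by (simp add: sum_nonneg)
  then show ?thesis using C_eig_odd_gt[OF True g(2)] by simp
next
  case False
  then have "Suc g < length \<alpha>" using g even_length by (metis Suc_lessI odd_pos even_Suc)
  then have "real (\<alpha> ! Suc g) \<le> odd_weight_above \<alpha> g"
    unfolding odd_weight_above_def using False
    by (intro member_le_sum[of "Suc g", THEN order_trans[rotated]]) auto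
  then show ?thesis using False nth_positive[OF \<open>Suc g < length \<alpha>\<close>] by (simp add: C_eig_def)
qed

lemma block_degree_C_0: "block_degree \<alpha> C_block_adj 0 = C_eig \<alpha> 1"
proof -
  have "block_degree \<alpha> C_block_adj 0
      = (\<Sum>b\<in>{0..<1}. if C_block_adj 0 b then real (\<alpha> ! b) else 0)
        + (if C_block_adj 0 1 then real (\<alpha> ! 1) else 0)
        + (\<Sum>b\<in>{Suc 1..<length \<alpha>}. if C_block_adj 0 b then real (\<alpha> ! b) else 0)"
    unfolding block_degree_def by (rule sum_atLeast0_split) (use length_ge_2 in linarith)
  also have "(\<Sum>b\<in>{Suc 1..<length \<alpha>}. if C_block_adj 0 b then real (\<alpha> ! b) else 0)
      = odd_weight_above \<alpha> 1"
    unfolding odd_weight_above_def by (rule sum.cong) (auto simp: C_block_adj_def)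
  also have "(\<Sum>b\<in>{0..<1}. if C_block_adj 0 b then real (\<alpha> ! b) else 0) = real (\<alpha> ! 0)"
    by (simp add: C_block_adj_def)
  also have "(if C_block_adj 0 1 then real (\<alpha> ! 1) else 0) = real (\<alpha> ! 1)"
    by (simp add: C_block_adj_def)
  moreover have "real (pre \<alpha> (Suc 1)) = real (\<alpha> ! 0) + real (\<alpha> ! 1)"
    using of_nat_pre[of "Suc 1" \<alpha>] length_ge_2 by simp
  ultimately show ?thesis by (simp add: C_eig_def)
qed

lemma quotient_eigvec_C_eq_0:
  assumes eig: "\<And>a. a < length \<alpha> \<Longrightarrow> quotient_laplacian \<alpha> C_block_adj t a = x * t a"
    and orth: "(\<Sum>b\<in>{0..<length \<alpha>}. real (\<alpha> ! b) * t b) = 0"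
    and not_eig: "x \<notin> C_eig \<alpha> ` {1..<length \<alpha>}"
    and b: "b < length \<alpha>"
  shows "t b = 0"
proof -
  have vanish: "\<forall>b\<in>{g..<length \<alpha>}. t b = 0" if "g \<le> length \<alpha>" for g
    using that
  proof (induction rule: inc_induct)
    case (step g)
    then have above: "\<And>b. g < b \<Longrightarrow> b < length \<alpha> \<Longrightarrow> t b = 0" by auto
    have "t g = 0"
    proof (cases "g = 0")
      case True
      then show ?thesis
        using quotient_laplacian_C_top(2)[OF step(2) above orth] nth_positive[OF step(2)] by simp
    next
      case False
      then have "C_eig \<alpha> g \<noteq> x" using not_eig step(2) by auto
      then show ?thesis using quotient_laplacian_C_top(1)[OF step(2) above orth] eig[OF step(2)] by simp
    qed
    with step show ?case by (metis atLeastLessThan_iff le_less Suc_leI)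
  qed simp
  then show ?thesis using vanish[of 0] b by simp
qed

lemma C_laplacian_eigenvalues_lower:
  "insert 0 (C_eig \<alpha> ` {1..<length \<alpha>}) \<subseteq> {x. eigenvalue (laplacian (sum_list \<alpha>) (C_graph_adj \<alpha>)) x}"
proof -
  have pos_0: "0 < \<alpha> ! 0" using length_ge_2 by (intro nth_positive) linarith
  have nonempty: "\<alpha> \<noteq> []" using length_ge_2 by (cases \<alpha>) simp_all
  have "eigenvalue (laplacian (sum_list \<alpha>) (C_graph_adj \<alpha>)) 0"
    unfolding C_graph_adj_eq_block_graph_adj[OF even_length]
    by (rule eigenvalue_block_graph_of_quotient[where t="\<lambda>_. 1" and c=0])
      (use nonempty pos_0 in simp_all)
  moreover have "eigenvalue (laplacian (sum_list \<alpha>) (C_graph_adj \<alpha>)) (C_eig \<alpha> g)"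
    if "g \<in> {1..<length \<alpha>}" for g
    unfolding C_graph_adj_eq_block_graph_adj[OF even_length]
    by (rule eigenvalue_block_graph_of_quotient[where t="C_eigvec \<alpha> g" and c=0])
      (use that pos_0 nth_positive[of g] in \<open>auto simp: quotient_laplacian_C_eigvec C_eigvec_def\<close>)
  ultimately show ?thesis by auto
qed

lemma C_laplacian_eigenvalues_upper:
  "{x. eigenvalue (laplacian (sum_list \<alpha>) (C_graph_adj \<alpha>)) x}
     \<subseteq> insert 0 (C_eig \<alpha> ` {1..<length \<alpha>}) \<union> block_degree \<alpha> C_block_adj ` {1..<length \<alpha>}"
proof
  let ?L = "laplacian (sum_list \<alpha>) (block_graph_adj \<alpha> C_block_adj)"
  fix x assume "x \<in> {x. eigenvalue (laplacian (sum_list \<alpha>) (C_graph_adj \<alpha>)) x}"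
  then obtain v where v: "v \<in> carrier_vec (sum_list \<alpha>)" "v \<noteq> 0\<^sub>v (sum_list \<alpha>)" "?L *\<^sub>v v = x \<cdot>\<^sub>v v"
    unfolding eigenvalue_def eigenvector_def C_graph_adj_eq_block_graph_adj[OF even_length] by auto
  show "x \<in> insert 0 (C_eig \<alpha> ` {1..<length \<alpha>}) \<union> block_degree \<alpha> C_block_adj ` {1..<length \<alpha>}"
  proof (rule ccontr)
    assume x: "x \<notin> insert 0 (C_eig \<alpha> ` {1..<length \<alpha>}) \<union> block_degree \<alpha> C_block_adj ` {1..<length \<alpha>}"
    have "block_degree \<alpha> C_block_adj a \<noteq> x" if "a < length \<alpha>" for a
      using x that block_degree_C_0 length_ge_2 by (cases "a = 0") auto
    then obtain t where v_eq: "v = block_vec \<alpha> t"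
      and eig: "\<And>a. a < length \<alpha> \<Longrightarrow> quotient_laplacian \<alpha> C_block_adj t a = x * t a"
      using block_graph_eigenvector_eq_block_vec[OF v(1,3)] nth_positive by metis
    have "x * (\<Sum>b\<in>{0..<length \<alpha>}. real (\<alpha> ! b) * t b) = x * (\<Sum>u\<in>{0..<sum_list \<alpha>}. v $ u)"
      by (simp only: v_eq sum_block_vec)
    also have "\<dots> = (\<Sum>u\<in>{0..<sum_list \<alpha>}. (?L *\<^sub>v v) $ u)"
      using v(1) by (simp add: v(3) sum_distrib_left)
    also have "\<dots> = 0"
      by (rule sum_laplacian_mult_vec[OF v(1)])
        (auto simp: block_graph_adj_def C_block_adj_def max_def)
    finally have "(\<Sum>b\<in>{0..<length \<alpha>}. real (\<alpha> ! b) * t b) = 0"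
      using x by simp
    then have "t b = 0" if "b < length \<alpha>" for b
      using quotient_eigvec_C_eq_0[OF eig] x that by blast
    then have "v = 0\<^sub>v (sum_list \<alpha>)" by (intro eq_vecI) (auto simp: v_eq block_of_bounds)
    with v(2) show False ..
  qed
qed

end

theorem theorem3p1:
  fixes \<alpha> :: "nat list"
  assumes "even (length \<alpha>)" and "length \<alpha> \<ge> 2" and "\<forall>a \<in> set \<alpha>. a > 0"
  shows "length \<alpha> \<le> num_distinct_lap_eigs (num_vertices \<alpha>) (C_graph_adj \<alpha>)
       \<and> num_distinct_lap_eigs (num_vertices \<alpha>) (C_graph_adj \<alpha>) \<le> 2 * length \<alpha> - 1"
proof -
  let ?k = "length \<alpha>"
  let ?lower = "insert 0 (C_eig \<alpha> ` {1..<?k})"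
  let ?upper = "?lower \<union> block_degree \<alpha> C_block_adj ` {1..<?k}"
  have eigs: "?lower \<subseteq> {x. eigenvalue (laplacian (sum_list \<alpha>) (C_graph_adj \<alpha>)) x}"
    "{x. eigenvalue (laplacian (sum_list \<alpha>) (C_graph_adj \<alpha>)) x} \<subseteq> ?upper"
    using C_laplacian_eigenvalues_lower C_laplacian_eigenvalues_upper assms by simp_all
  have "0 \<notin> C_eig \<alpha> ` {1..<?k}" using C_eig_pos[OF assms] by force
  then have "card ?lower = ?k"
    using card_image[OF inj_on_C_eig[OF assms]] assms(2) by simp
  moreover have "card ?upper \<le> 2 * ?k - 1"
  proof -
    have "card ?upper \<le> card ?lower + card (block_degree \<alpha> C_block_adj ` {1..<?k})"
      by (rule card_Un_le)
    also have "\<dots> \<le> ?k + (?k - 1)"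
      using card_image_le[of "{1..<?k}" "block_degree \<alpha> C_block_adj"] \<open>card ?lower = ?k\<close> by simp
    finally show ?thesis using assms(2) by simp
  qed
  ultimately show ?thesis
    using card_mono[OF _ eigs(1)] card_mono[OF _ eigs(2)] finite_subset[OF eigs(2)]
    by (simp add: num_distinct_lap_eigs_def num_vertices_def)
qed

end
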